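(* Consider the $Z_1$-Game on a tree $T$, at a position where at least one vertex is filled. Then, without spending any further tokens (using only the filling rule and the oracle operation), the player can, regardless of the oracle's responses, reach a position in which either all vertices are filled or there is exactly one filled vertex adjacent to two or more unfilled vertices.
   Context: Filling rule: if a filled vertex has exactly one unfilled neighbor (and any number of filled neighbors), that neighbor becomes filled; "applying the filling rule in a subgraph $H$" means applying it with neighborhoods taken in $H$. The $Z_q$-Game on $G$ ($q\ge 0$ an integer): initially all vertices are unfilled; a player repeatedly performs one of the following operations until all vertices are filled: (1) for one token, change any vertex from unfilled to filled; (2) at no cost, apply the filling rule in $G$; (3) if $F$ is the current set of filled vertices and $U_1,\dots,U_k$ are the vertex sets of the connected components of $G[V(G)\setminus F]$ with $k\ge q+1$, the player announces a selection of at least $q+1$ of the $U_i$ to an oracle (an adversary), the oracle returns a nonempty subset $\{U_{i_1},\dots,U_{i_\ell}\}$ of the selected components, and the player may at no cost apply the filling rule in $G[F\cup U_{i_1}\cup\cdots\cup U_{i_\ell}]$. The $Z_1$-Game is the case $q=1$. *)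

theory Defs
  imports Main
begin

definition simple_graph :: "'a set \<Rightarrow> ('a \<Rightarrow> 'a \<Rightarrow> bool) \<Rightarrow> bool" where
  "simple_graph V E \<longleftrightarrow> finite V \<and> (\<forall>u v. E u v \<longrightarrow> u \<in> V \<and> v \<in> V)
     \<and> (\<forall>u v. E u v \<longrightarrow> E v u) \<and> (\<forall>v. \<not> E v v)"

definition reach_in :: "'a set \<Rightarrow> ('a \<Rightarrow> 'a \<Rightarrow> bool) \<Rightarrow> 'a \<Rightarrow> 'a \<Rightarrow> bool" where
  "reach_in W E = (\<lambda>x y. E x y \<and> x \<in> W \<and> y \<in> W)\<^sup>*\<^sup>*"

definition connected_graph :: "'a set \<Rightarrow> ('a \<Rightarrow> 'a \<Rightarrow> bool) \<Rightarrow> bool" where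
  "connected_graph V E \<longleftrightarrow> V \<noteq> {} \<and> (\<forall>u\<in>V. \<forall>v\<in>V. reach_in V E u v)"

definition is_cycle :: "('a \<Rightarrow> 'a \<Rightarrow> bool) \<Rightarrow> 'a list \<Rightarrow> bool" where
  "is_cycle E cs \<longleftrightarrow> length cs \<ge> 3 \<and> distinct cs
     \<and> (\<forall>i. Suc i < length cs \<longrightarrow> E (cs ! i) (cs ! Suc i))
     \<and> E (last cs) (hd cs)"

definition tree :: "'a set \<Rightarrow> ('a \<Rightarrow> 'a \<Rightarrow> bool) \<Rightarrow> bool" where
  "tree V E \<longleftrightarrow> simple_graph V E \<and> connected_graph V E \<and> (\<nexists>cs. is_cycle E cs)"

definition components :: "'a set \<Rightarrow> ('a \<Rightarrow> 'a \<Rightarrow> bool) \<Rightarrow> 'a set set" where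
  "components W E = {{v \<in> W. reach_in W E u v} | u. u \<in> W}"

definition fill_step :: "'a set \<Rightarrow> ('a \<Rightarrow> 'a \<Rightarrow> bool) \<Rightarrow> 'a set \<Rightarrow> 'a set \<Rightarrow> bool" where
  "fill_step W E F F' \<longleftrightarrow> (\<exists>v w. v \<in> F \<and> w \<in> W - F \<and> E v w
       \<and> (\<forall>u. u \<in> W - F \<and> E v u \<longrightarrow> u = w) \<and> F' = insert w F)"

(* Token-free play of the Z_q-Game: from the position F (set of filled vertices),
  the player can force, whatever the adversary answers, reaching a position satisfying Goal,
  using only operations (2) and (3). *)
inductive can_reach_free :: "nat \<Rightarrow> 'a set \<Rightarrow> ('a \<Rightarrow> 'a \<Rightarrow> bool) \<Rightarrow> ('a set \<Rightarrow> bool) \<Rightarrow> 'a set \<Rightarrow> bool"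
  for q V E Goal where
  goal: "Goal F \<Longrightarrow> can_reach_free q V E Goal F"
| fill: "fill_step V E F F' \<Longrightarrow> can_reach_free q V E Goal F' \<Longrightarrow> can_reach_free q V E Goal F"
| adversary_move: "S \<subseteq> components (V - F) E \<Longrightarrow> card S \<ge> q + 1 \<Longrightarrow>
     (\<forall>R. R \<subseteq> S \<and> R \<noteq> {} \<longrightarrow>
        (\<exists>F'. (F' = F \<or> fill_step (F \<union> \<Union>R) E F F') \<and> can_reach_free q V E Goal F'))
     \<Longrightarrow> can_reach_free q V E Goal F"

end

theory Submission
  imports Defs "HOL-Library.Transitive_Closure_Table"
begin

text \<open>Suppose the position is not yet final and no filled vertex forces.  Then two distinct
  filled vertices \<open>v\<^sub>1\<close>, \<open>v\<^sub>2\<close> have at least two unfilled neighbours each.  In a tree every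
  vertex outside an unfilled component \<open>U\<close> has at most one neighbour in \<open>U\<close>, and \<open>v\<^sub>1\<close>, \<open>v\<^sub>2\<close>
  cannot both be adjacent to two common components.  Hence some component \<open>A\<close> next to \<open>v\<^sub>1\<close> is
  not adjacent to \<open>v\<^sub>2\<close>; let \<open>C\<close> be a component next to \<open>v\<^sub>2\<close>.  Offering \<open>{A, C}\<close> to the oracle,
  \<open>v\<^sub>1\<close> forces into \<open>A\<close> if the answer is \<open>{A}\<close>, and \<open>v\<^sub>2\<close> forces into \<open>C\<close> otherwise.  Either
  way one more vertex is filled, so induction on the number of unfilled vertices concludes.\<close>

definition Z1_terminal :: "'a set \<Rightarrow> ('a \<Rightarrow> 'a \<Rightarrow> bool) \<Rightarrow> 'a set \<Rightarrow> bool" where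
  "Z1_terminal V E F \<longleftrightarrow> F = V \<or> (\<exists>!v. v \<in> F \<and> card {u \<in> V - F. E v u} \<ge> 2)"

lemma reach_in_refl: "reach_in W E x x"
  by (simp add: reach_in_def)

lemma reach_in_trans: "reach_in W E x y \<Longrightarrow> reach_in W E y z \<Longrightarrow> reach_in W E x z"
  unfolding reach_in_def by simp

lemma reach_in_edge: "E x y \<Longrightarrow> x \<in> W \<Longrightarrow> y \<in> W \<Longrightarrow> reach_in W E x y"
  unfolding reach_in_def by (simp add: r_into_rtranclp)

lemma reach_in_sym: "symp E \<Longrightarrow> reach_in W E x y \<Longrightarrow> reach_in W E y x"
  unfolding reach_in_def by (rule sympD[OF symp_rtranclp]) (auto simp: symp_def)

lemma reach_in_mono: "W \<subseteq> W' \<Longrightarrow> reach_in W E x y \<Longrightarrow> reach_in W' E x y"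
  unfolding reach_in_def by (erule rtranclp_mono[THEN predicate2D, rotated]) auto

lemma rtrancl_path_induced:
  "rtrancl_path (\<lambda>x y. E x y \<and> x \<in> W \<and> y \<in> W) x xs y \<Longrightarrow>
     set xs \<subseteq> W \<and> successively E (x # xs) \<and> last (x # xs) = y"
proof (induction rule: rtrancl_path.induct)
  case (step x y ys z)
  then show ?case by (cases ys) auto
qed simp

lemma reach_in_path:
  assumes "reach_in W E a b"
  obtains xs where "distinct (a # xs)" "set xs \<subseteq> W" "successively E (a # xs)" "last (a # xs) = b"
proof -
  obtain ys where "rtrancl_path (\<lambda>x y. E x y \<and> x \<in> W \<and> y \<in> W) a ys b"
    using assms by (auto simp: reach_in_def rtranclp_eq_rtrancl_path)
  then obtain xs where path: "rtrancl_path (\<lambda>x y. E x y \<and> x \<in> W \<and> y \<in> W) a xs b"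
    and "distinct (a # xs)"
    by (rule rtrancl_path_distinct)
  show thesis
    using rtrancl_path_induced[OF path] \<open>distinct (a # xs)\<close> by (intro that) auto
qed

lemma is_cycle_ConsI:
  assumes "successively E xs" "distinct (v # xs)" "length xs \<ge> 2"
    and "E v (hd xs)" "E (last xs) v"
  shows "is_cycle E (v # xs)"
proof -
  have "successively E (v # xs)" using assms(1,4) by (cases xs) auto
  then show ?thesis
    using assms(2-5) unfolding is_cycle_def successively_conv_nth[symmetric] by (cases xs) auto
qed

lemma neighbours_in_component_eq:
  assumes sym: "symp E" and acyclic: "\<nexists>cs. is_cycle E cs"
    and "v \<notin> W" "x \<in> W" "E v x" "E v x'" "reach_in W E x x'"
  shows "x = x'"
proof (rule ccontr)
  assume "x \<noteq> x'"
  obtain xs where xs: "distinct (x # xs)" "set xs \<subseteq> W" "successively E (x # xs)"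
      "last (x # xs) = x'"
    using reach_in_path[OF assms(7)] .
  have "is_cycle E (v # x # xs)"
  proof (rule is_cycle_ConsI)
    show "2 \<le> length (x # xs)" using xs(4) \<open>x \<noteq> x'\<close> by (cases xs) auto
    show "distinct (v # x # xs)" using xs(1,2) assms(3,4) by auto
    show "E (last (x # xs)) v" using sym \<open>E v x'\<close> xs(4) by (simp add: symp_def)
  qed (use xs(3) assms(5) in auto)
  then show False using acyclic by blast
qed

text \<open>A path through \<open>v\<^sub>2\<close> joins the two components inside \<open>insert v\<^sub>2 W\<close>, which
  \<open>v\<^sub>1\<close> still avoids.\<close>

lemma two_vertices_share_one_component:
  assumes sym: "symp E" and acyclic: "\<nexists>cs. is_cycle E cs"
    and "v\<^sub>1 \<notin> W" "v\<^sub>1 \<noteq> v\<^sub>2" "a \<in> W" "x \<in> W" "x' \<in> W"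
    and "E v\<^sub>1 a" "E v\<^sub>1 b" "E v\<^sub>2 x" "E v\<^sub>2 x'" "reach_in W E a x" "reach_in W E b x'"
  shows "a = b"
proof -
  let ?W = "insert v\<^sub>2 W"
  have "reach_in ?W E a x" "reach_in ?W E x' b"
    using assms(12,13) reach_in_sym[OF sym] by (auto intro: reach_in_mono)
  moreover have "reach_in ?W E x x'"
    using assms(6,7,10,11) sym
    by (auto simp: symp_def intro: reach_in_trans reach_in_edge)
  ultimately have "reach_in ?W E a b" by (blast intro: reach_in_trans)
  then show ?thesis
    using assms(3-5,8,9) by (intro neighbours_in_component_eq[OF sym acyclic]) auto
qed

lemma neighbour_component_avoiding:
  assumes sym: "symp E" and acyclic: "\<nexists>cs. is_cycle E cs"
    and "v\<^sub>1 \<notin> W" "v\<^sub>1 \<noteq> v\<^sub>2" "a \<in> W" "b \<in> W" "a \<noteq> b" "E v\<^sub>1 a" "E v\<^sub>1 b"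
  obtains c where "c \<in> W" "E v\<^sub>1 c" "\<forall>x\<in>W. reach_in W E c x \<longrightarrow> \<not> E v\<^sub>2 x"
proof (cases "\<forall>x\<in>W. reach_in W E a x \<longrightarrow> \<not> E v\<^sub>2 x")
  case True
  then show thesis using that assms(5,8) by blast
next
  case False
  then obtain x where "x \<in> W" "reach_in W E a x" "E v\<^sub>2 x" by blast
  have "\<not> E v\<^sub>2 x'" if "x' \<in> W" "reach_in W E b x'" for x'
  proof
    assume "E v\<^sub>2 x'"
    with two_vertices_share_one_component[OF sym acyclic] assms(3-9) that \<open>x \<in> W\<close>
      \<open>reach_in W E a x\<close> \<open>E v\<^sub>2 x\<close>
    have "a = b" by blast
    with \<open>a \<noteq> b\<close> show False ..
  qed
  then show thesis using that assms(6,9) by blast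
qed

lemma fill_step_component:
  assumes sym: "symp E" and acyclic: "\<nexists>cs. is_cycle E cs"
    and "v \<in> F" "X \<subseteq> V - F" "c \<in> X" "E v c"
    and "\<forall>u\<in>X. E v u \<longrightarrow> reach_in (V - F) E c u"
  shows "fill_step (F \<union> X) E F (insert c F)"
  unfolding fill_step_def
proof (intro exI conjI allI impI)
  fix u
  assume "u \<in> F \<union> X - F \<and> E v u"
  then show "u = c"
    using assms neighbours_in_component_eq[OF sym acyclic, of v "V - F" c u] by auto
qed (use assms in auto)

lemma can_reach_free_oracle_move:
  assumes sym: "symp E" and acyclic: "\<nexists>cs. is_cycle E cs"
    and "v\<^sub>1 \<in> F" "v\<^sub>2 \<in> F" "v\<^sub>1 \<noteq> v\<^sub>2"
    and "a \<in> V - F" "b \<in> V - F" "a \<noteq> b" "E v\<^sub>1 a" "E v\<^sub>1 b" "y \<in> V - F" "E v\<^sub>2 y"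
    and forward: "\<And>w. w \<in> V - F \<Longrightarrow> can_reach_free 1 V E Goal (insert w F)"
  shows "can_reach_free 1 V E Goal F"
proof -
  have "v\<^sub>1 \<notin> V - F" using assms(3) by blast
  then obtain c where c: "c \<in> V - F" "E v\<^sub>1 c"
    and avoid: "\<forall>x\<in>V - F. reach_in (V - F) E c x \<longrightarrow> \<not> E v\<^sub>2 x"
    by (rule neighbour_component_avoiding[OF sym acyclic _ assms(5-10)])
  define A where "A = {z \<in> V - F. reach_in (V - F) E c z}"
  define C where "C = {z \<in> V - F. reach_in (V - F) E y z}"
  have "c \<in> A" "y \<in> C"
    using c(1) assms(11) by (simp_all add: A_def C_def reach_in_refl)
  have "y \<notin> A" using avoid assms(11,12) by (auto simp: A_def)
  then have "A \<noteq> C" using \<open>y \<in> C\<close> by blast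
  have fill_A: "fill_step (F \<union> A) E F (insert c F)"
    using \<open>c \<in> A\<close> c assms(3)
    by (intro fill_step_component[OF sym acyclic]) (auto simp: A_def)
  have fill_C: "fill_step (F \<union> X) E F (insert y F)" if "X = C \<or> X = A \<union> C" for X
    using that \<open>y \<in> C\<close> avoid assms(4,12)
    by (intro fill_step_component[OF sym acyclic]) (auto simp: A_def C_def)
  show ?thesis
  proof (rule can_reach_free.adversary_move)
    show "{A, C} \<subseteq> components (V - F) E"
      using c assms(11) unfolding components_def A_def C_def by blast
    show "1 + 1 \<le> card {A, C}"
      using \<open>A \<noteq> C\<close> by simp
    show "\<forall>R. R \<subseteq> {A, C} \<and> R \<noteq> {} \<longrightarrow>
      (\<exists>F'. (F' = F \<or> fill_step (F \<union> \<Union> R) E F F') \<and> can_reach_free 1 V E Goal F')"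
    proof (intro allI impI)
      fix R
      assume "R \<subseteq> {A, C} \<and> R \<noteq> {}"
      then consider "R = {A}" | "R = {C}" | "R = {A, C}" by blast
      then have "\<exists>w\<in>{c, y}. fill_step (F \<union> \<Union> R) E F (insert w F)"
      proof cases
        case 1
        then show ?thesis using fill_A by simp
      next
        case 2
        then show ?thesis using fill_C[of C] by simp
      next
        case 3
        then show ?thesis using fill_C[of "A \<union> C"] by simp
      qed
      then show "\<exists>F'. (F' = F \<or> fill_step (F \<union> \<Union> R) E F F') \<and> can_reach_free 1 V E Goal F'"
        using forward c(1) assms(11) by blast
    qed
  qed
qed

lemma connected_graph_boundary_edge:
  assumes "connected_graph V E" "F \<subseteq> V" "F \<noteq> {}" "F \<noteq> V"
  obtains v u where "v \<in> F" "u \<in> V - F" "E v u"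
proof -
  obtain f x where "f \<in> F" "x \<in> V - F" using assms(2-4) by blast
  then have "(\<lambda>x y. E x y \<and> x \<in> V \<and> y \<in> V)\<^sup>*\<^sup>* f x"
    using assms(1,2) unfolding connected_graph_def reach_in_def by blast
  then have "x \<notin> F \<longrightarrow> (\<exists>v\<in>F. \<exists>u\<in>V - F. E v u)"
    by (induction rule: rtranclp_induct) (use \<open>f \<in> F\<close> in auto)
  then show thesis using that \<open>x \<in> V - F\<close> by blast
qed

lemma can_reach_free_Z1_terminal_step:
  assumes tree: "tree V E" and "F \<subseteq> V" "F \<noteq> {}" and not_terminal: "\<not> Z1_terminal V E F"
    and forward: "\<And>w. w \<in> V - F \<Longrightarrow> can_reach_free 1 V E (Z1_terminal V E) (insert w F)"
  shows "can_reach_free 1 V E (Z1_terminal V E) F"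
proof (cases "\<exists>v\<in>F. card {u \<in> V - F. E v u} = 1")
  case True
  then obtain v w where "v \<in> F" "{u \<in> V - F. E v u} = {w}"
    by (metis card_1_singletonE)
  then have "fill_step V E F (insert w F)" "w \<in> V - F"
    unfolding fill_step_def by blast+
  then show ?thesis using forward can_reach_free.fill by blast
next
  case False
  have sym: "symp E" and acyclic: "\<nexists>cs. is_cycle E cs" and "finite V"
    using tree by (auto simp: tree_def simple_graph_def symp_def)
  have "F \<noteq> V" using not_terminal by (auto simp: Z1_terminal_def)
  then obtain v\<^sub>1 a where "v\<^sub>1 \<in> F" "a \<in> V - F" "E v\<^sub>1 a"
    using connected_graph_boundary_edge[of V E F] tree assms(2,3) by (auto simp: tree_def)
  have "card {u \<in> V - F. E v\<^sub>1 u} \<noteq> 0"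
    using \<open>a \<in> V - F\<close> \<open>E v\<^sub>1 a\<close> \<open>finite V\<close> by auto
  moreover have "card {u \<in> V - F. E v\<^sub>1 u} \<noteq> 1"
    using False \<open>v\<^sub>1 \<in> F\<close> by blast
  ultimately have two: "card {u \<in> V - F. E v\<^sub>1 u} \<ge> 2" by arith
  then have "{u \<in> V - F. E v\<^sub>1 u} \<noteq> {a}" by auto
  then obtain b where "b \<in> V - F" "E v\<^sub>1 b" "b \<noteq> a"
    using \<open>a \<in> V - F\<close> \<open>E v\<^sub>1 a\<close> by blast
  obtain v\<^sub>2 where "v\<^sub>2 \<in> F" "v\<^sub>2 \<noteq> v\<^sub>1" "card {u \<in> V - F. E v\<^sub>2 u} \<ge> 2"
    using not_terminal two \<open>v\<^sub>1 \<in> F\<close> unfolding Z1_terminal_def by blast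
  then have "{u \<in> V - F. E v\<^sub>2 u} \<noteq> {}" by (metis card.empty not_numeral_le_zero)
  then obtain y where "y \<in> V - F" "E v\<^sub>2 y" by blast
  show ?thesis
    by (rule can_reach_free_oracle_move[OF sym acyclic \<open>v\<^sub>1 \<in> F\<close> \<open>v\<^sub>2 \<in> F\<close>
          \<open>v\<^sub>2 \<noteq> v\<^sub>1\<close>[symmetric] \<open>a \<in> V - F\<close> \<open>b \<in> V - F\<close> \<open>b \<noteq> a\<close>[symmetric]
          \<open>E v\<^sub>1 a\<close> \<open>E v\<^sub>1 b\<close> \<open>y \<in> V - F\<close> \<open>E v\<^sub>2 y\<close> forward])
qed

theorem proposition3p2:
  fixes V :: "'a set" and E :: "'a \<Rightarrow> 'a \<Rightarrow> bool" and F :: "'a set"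
  assumes "tree V E"
    and "F \<subseteq> V"
    and "F \<noteq> {}"
  shows "can_reach_free 1 V E
           (\<lambda>F'. F' = V \<or> (\<exists>!v. v \<in> F' \<and> card {u \<in> V - F'. E v u} \<ge> 2)) F"
proof -
  have "finite V" using assms(1) by (simp add: tree_def simple_graph_def)
  have "can_reach_free 1 V E (Z1_terminal V E) F"
    using assms(2,3)
  proof (induction "card (V - F)" arbitrary: F rule: less_induct)
    case less
    have forward: "can_reach_free 1 V E (Z1_terminal V E) (insert w F)" if "w \<in> V - F" for w
    proof (rule less.hyps)
      show "card (V - insert w F) < card (V - F)"
        using that \<open>finite V\<close> by (intro psubset_card_mono) auto
    qed (use that less.prems in auto)
    show ?case
    proof (cases "Z1_terminal V E F")
      case True
      then show ?thesis by (rule can_reach_free.goal)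
    next
      case False
      show ?thesis
        using assms(1) less.prems False forward by (rule can_reach_free_Z1_terminal_step)
    qed
  qed
  then show ?thesis unfolding Z1_terminal_def .
qed

end
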